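(* Let $B>0$ and let $(\sigma_j)_{j\ge1}$ be positive numbers with $\sigma_j\le B/2$ for all $j$ and $\sum_{j}\sigma_j^2=\infty$. Consider the random-walk adversary that draws every loss $\ell_{j,i}$ independently and uniformly from $\{-\sigma_j,\sigma_j\}$. There is an explicit constant $\epsilon_0>0$ such that for any algorithm and any $0<\epsilon<\epsilon_0$, there exist $N=N(\epsilon)=\Theta(1/\epsilon^2)$ and $T=T(\epsilon)$ such that, in the experts game with $N$ experts played against this adversary, $$\frac{\mathbb{E}[\mathrm{Regret}_\epsilon(T)]}{\sqrt{\sum_{j=1}^T\sigma_j^2}}\ge\sqrt{2\log(1/\epsilon)}-6.$$
   Context: Experts game with $N$ experts: in each round $j$ the algorithm chooses $\boldsymbol p_j\in\Delta^{N-1}$ (depending only on past losses), then the loss vector $\boldsymbol\ell_j\in\mathbb{R}^N$ is revealed. The regret vector is $\boldsymbol x_T=\sum_{j=1}^T(\langle\boldsymbol p_j,\boldsymbol\ell_j\rangle\mathbf 1-\boldsymbol\ell_j)$ and $\mathrm{Regret}_\epsilon(T)=x_{T,(\lfloor N\epsilon\rfloor)}$, the $\lfloor N\epsilon\rfloor$-th largest coordinate of $\boldsymbol x_T$. The expectation is over the random losses (and any internal randomness). *)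

theory Defs
  imports "HOL-Probability.Probability"
begin

text \<open>A loss sequence is a function L :: nat \<times> nat \<Rightarrow> real, where L (j, i) is the loss of
  expert i (0 \<le> i < N) in round j (j \<ge> 1). A (deterministic) algorithm for N experts is a
  function alg :: nat \<Rightarrow> (nat \<times> nat \<Rightarrow> real) \<Rightarrow> nat \<Rightarrow> real, where alg j L i is the weight
  p_{j,i} put on expert i in round j; it may depend only on the losses of rounds before j.\<close>

definition valid_algorithm :: "nat \<Rightarrow> (nat \<Rightarrow> (nat \<times> nat \<Rightarrow> real) \<Rightarrow> nat \<Rightarrow> real) \<Rightarrow> bool" where
  "valid_algorithm N alg \<longleftrightarrow>
     (\<forall>j L. (\<forall>i<N. alg j L i \<ge> 0) \<and> (\<Sum>i<N. alg j L i) = 1) \<and>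
     (\<forall>j L L'. (\<forall>j'<j. \<forall>i. L (j', i) = L' (j', i)) \<longrightarrow> alg j L = alg j L')"

definition regret_vec ::
  "nat \<Rightarrow> (nat \<Rightarrow> (nat \<times> nat \<Rightarrow> real) \<Rightarrow> nat \<Rightarrow> real) \<Rightarrow> nat \<Rightarrow> (nat \<times> nat \<Rightarrow> real) \<Rightarrow> nat \<Rightarrow> real" where
  "regret_vec N alg T L i = (\<Sum>j=1..T. (\<Sum>k<N. alg j L k * L (j, k)) - L (j, i))"

definition kth_largest :: "nat \<Rightarrow> nat \<Rightarrow> (nat \<Rightarrow> real) \<Rightarrow> real" where
  "kth_largest N k x = rev (sort (map x [0..<N])) ! (k - 1)"

definition regret_eps ::
  "nat \<Rightarrow> (nat \<Rightarrow> (nat \<times> nat \<Rightarrow> real) \<Rightarrow> nat \<Rightarrow> real) \<Rightarrow> nat \<Rightarrow> real \<Rightarrow> (nat \<times> nat \<Rightarrow> real) \<Rightarrow> real" where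
  "regret_eps N alg T \<epsilon> L = kth_largest N (nat \<lfloor>real N * \<epsilon>\<rfloor>) (regret_vec N alg T L)"

definition random_walk_losses :: "(nat \<Rightarrow> real) \<Rightarrow> nat \<Rightarrow> nat \<Rightarrow> (nat \<times> nat \<Rightarrow> real) pmf" where
  "random_walk_losses \<sigma> N T =
     Pi_pmf ({1..T} \<times> {..<N}) 0 (\<lambda>(j, i). pmf_of_set {- \<sigma> j, \<sigma> j})"

end

theory Submission
  imports Defs
begin

(*
  Against independent symmetric losses the algorithm's own cumulative loss has mean zero,
  so the expected epsilon-regret equals the expected k-th largest (k = floor (N epsilon)) of
  N independent Rademacher walks W = sum_j (+-sigma_j), whose moment generating function is
  prod_j cosh (theta sigma_j), close to exp (theta^2 S / 2) where S = sum_j sigma_j^2.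
  Exponential tilting shows that a walk exceeds (y - 2) sqrt S with probability
  q >= exp (-y^2/2 - 2y) / 2, and a Chernoff bound shows that fewer than k of the N walks
  do so only with probability exp (k - N q / 2); on that event the order statistic is
  controlled by the second moment.  With N ~ 1/epsilon^2 and y = sqrt (2 ln (1/epsilon)) - 3
  both error terms are at most sqrt S / 2, leaving (y - 3) sqrt S.
*)

section \<open>Hyperbolic cosine\<close>

lemma cosh_le_exp_half_square: "cosh z \<le> exp (z^2 / 2 :: real)"
proof -
  have "cosh l \<le> exp (l^2 / 2)" if "l > 0" for l :: real
  proof -
    interpret interval_bounded_random_variable "measure_pmf (pmf_of_set {-1, 1::real})" "\<lambda>x. x" "-1" "1"
      by unfold_locales (auto simp: AE_measure_pmf_iff)
    have "ennreal (cosh l) = ennreal (exp (-l) + exp l) / 2"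
      by (subst ennreal_divide_numeral) (auto simp: cosh_field_def add.commute)
    also have "\<dots> = (\<integral>\<^sup>+x. exp (l * x) \<partial>measure_pmf (pmf_of_set {-1, 1}))"
      by (subst nn_integral_pmf_of_set) (auto simp: ennreal_plus)
    also have "\<dots> \<le> ennreal (exp (l^2 * (1 - (-1))^2 / 8))"
      by (rule Hoeffdings_lemma_nn_integral_0[OF that]) (simp add: integral_pmf_of_set)
    finally show ?thesis by (simp add: power2_eq_square)
  qed
  from this[of z] this[of "-z"] show ?thesis
    by (cases z "0::real" rule: linorder_cases) auto
qed

lemma one_plus_half_square_le_cosh: "1 + z^2 / 2 \<le> cosh (z::real)"
proof -
  let ?f = "\<lambda>n. if even n then z ^ n /\<^sub>R fact n else 0"
  have "(\<Sum>n<3. ?f n) \<le> suminf ?f"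
    using cosh_converges[of z] by (intro sum_le_suminf) (auto simp: sums_iff zero_le_even_power)
  also have "suminf ?f = cosh z" using cosh_converges[of z] by (simp add: sums_iff)
  finally show ?thesis by (simp add: eval_nat_numeral)
qed

lemma exp_half_square_minus_le_cosh:
  assumes "z^2 / 2 \<le> 1"
  shows "exp (z^2 / 2 - z^4 / 4) \<le> cosh (z::real)"
proof -
  define x where "x = z^2 / 2"
  have "0 \<le> x"
    by (simp add: x_def)
  have "x - x^2 \<le> ln (1 + x)"
    using assms by (intro ln_one_plus_pos_lower_bound) (auto simp: x_def)
  then have "exp (x - x^2) \<le> exp (ln (1 + x))"
    by simp
  also have "\<dots> = 1 + x"
    using \<open>0 \<le> x\<close> by simp
  also have "1 + x \<le> cosh z"
    using one_plus_half_square_le_cosh by (simp add: x_def)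
  finally show ?thesis
    by (simp add: x_def power2_eq_square power4_eq_xxxx mult.assoc)
qed

section \<open>Order statistics\<close>

lemma kth_largest_shift:
  assumes "1 \<le> k" "k \<le> N"
  shows "kth_largest N k (\<lambda>i. c + x i) = c + kth_largest N k x"
proof -
  have "map (\<lambda>i. c + x i) [0..<N] = map ((+) c) (map x [0..<N])"
    by simp
  moreover have "sort (map ((+) c) xs) = map ((+) c) (sort xs)" for xs :: "real list"
    by (rule properties_for_sort) (auto intro: sorted_map_mono simp: mono_on_def)
  ultimately show ?thesis
    using assms by (simp add: kth_largest_def rev_map nth_map del: map_map)
qed

lemma kth_largest_mem:
  assumes "1 \<le> k" "k \<le> N"
  shows "\<exists>i<N. kth_largest N k x = x i"
proof -
  have "kth_largest N k x \<in> set (rev (sort (map x [0..<N])))"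
    unfolding kth_largest_def using assms by (intro nth_mem) auto
  then show ?thesis by auto
qed

lemma kth_largest_ge:
  assumes "1 \<le> k" "k \<le> N" "k \<le> card {i. i < N \<and> a \<le> x i}"
  shows "a \<le> kth_largest N k x"
proof (rule ccontr)
  define ys where "ys = sort (map x [0..<N])"
  have len: "length ys = N" by (simp add: ys_def)
  assume "\<not> a \<le> kth_largest N k x"
  then have "ys ! (N - k) < a"
    using assms len by (simp add: kth_largest_def ys_def[symmetric] rev_nth Suc_diff_le)
  then have small: "ys ! m < a" if "m \<le> N - k" for m
    using that assms len sorted_nth_mono[of ys m "N - k"] by (simp add: ys_def)
  have "card {i. i < N \<and> a \<le> x i} = length (filter ((\<le>) a) (map x [0..<N]))"
    unfolding length_filter_conv_card by (intro arg_cong[where f = card]) auto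
  also have "\<dots> = length (filter ((\<le>) a) ys)"
    by (metis mset_filter mset_sort size_mset ys_def)
  also have "\<dots> = card {m. m < N \<and> a \<le> ys ! m}"
    by (simp add: length_filter_conv_card len)
  also have "\<dots> \<le> card {N - k + 1..<N}"
  proof (rule card_mono)
    show "{m. m < N \<and> a \<le> ys ! m} \<subseteq> {N - k + 1..<N}"
      using small by (auto simp: Suc_le_eq) (meson not_le)
  qed simp
  finally show False using assms by simp
qed

lemma kth_largest_lower_bound:
  assumes "1 \<le> k" "k \<le> N" "\<theta> > 0"
  shows "a - (a + \<theta> / 2) * of_bool (card {i. i < N \<and> a \<le> x i} < k) - (\<Sum>i<N. x i ^ 2 / (2 * \<theta>))
           \<le> kth_largest N k x"
proof (cases "card {i. i < N \<and> a \<le> x i} < k")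
  case False
  then have "a \<le> kth_largest N k x"
    by (intro kth_largest_ge assms) simp
  moreover have "0 \<le> (\<Sum>i<N. x i ^ 2 / (2 * \<theta>))"
    using \<open>\<theta> > 0\<close> by (intro sum_nonneg) simp
  ultimately show ?thesis
    using False by simp
next
  case True
  obtain m where m: "m < N" "kth_largest N k x = x m"
    using kth_largest_mem[OF assms(1,2)] by blast
  have "x m ^ 2 / (2 * \<theta>) \<le> (\<Sum>i<N. x i ^ 2 / (2 * \<theta>))"
    using m \<open>\<theta> > 0\<close> by (intro member_le_sum) auto
  moreover have "\<bar>x m\<bar> \<le> x m ^ 2 / (2 * \<theta>) + \<theta> / 2"
  proof -
    have "2 * \<theta> * \<bar>x m\<bar> \<le> x m ^ 2 + \<theta>^2"
      using sum_squares_ge_zero[of "\<bar>x m\<bar> - \<theta>" 0]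
      by (simp add: power2_eq_square algebra_simps)
    then show ?thesis
      using \<open>\<theta> > 0\<close> by (simp add: field_simps power2_eq_square)
  qed
  ultimately show ?thesis
    using True m by (simp add: algebra_simps)
qed

section \<open>Products of probability mass functions\<close>

lemma finite_set_Pi_pmf:
  assumes "finite A" "\<And>x. x \<in> A \<Longrightarrow> finite (set_pmf (p x))"
  shows "finite (set_pmf (Pi_pmf A d p))"
  using assms by (subst set_Pi_pmf) (auto intro!: finite_PiE_dflt)

lemma Pi_pmf_Times:
  assumes A: "finite A" and B: "finite B"
  shows "Pi_pmf (A \<times> B) d p =
    map_pmf (\<lambda>g (a, b). g b a) (Pi_pmf B (\<lambda>_. d) (\<lambda>b. Pi_pmf A d (\<lambda>a. p (a, b))))"
    (is "_ = map_pmf ?F ?Q")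
proof (rule pmf_eqI)
  fix h :: "'a \<times> 'b \<Rightarrow> 'c"
  let ?G = "\<lambda>b a. h (a, b)"
  have "inj ?F"
    by (rule injI) (force simp: fun_eq_iff)
  then have "pmf (map_pmf ?F ?Q) h = pmf ?Q ?G"
    using pmf_map_inj'[of ?F ?Q ?G] by (simp add: case_prod_beta')
  also have "\<dots> = pmf (Pi_pmf (A \<times> B) d p) h"
  proof (cases "\<forall>z. z \<notin> A \<times> B \<longrightarrow> h z = d")
    case True
    have "pmf ?Q ?G = (\<Prod>b\<in>B. pmf (Pi_pmf A d (\<lambda>a. p (a, b))) (?G b))"
      using True by (subst pmf_Pi') (auto simp: B fun_eq_iff)
    also have "\<dots> = (\<Prod>b\<in>B. \<Prod>a\<in>A. pmf (p (a, b)) (h (a, b)))"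
      using True by (intro prod.cong refl, subst pmf_Pi') (auto simp: A)
    also have "\<dots> = (\<Prod>z\<in>A \<times> B. pmf (p z) (h z))"
      by (subst prod.swap) (simp add: prod.cartesian_product)
    also have "\<dots> = pmf (Pi_pmf (A \<times> B) d p) h"
      using True by (subst pmf_Pi') (auto simp: A B)
    finally show ?thesis .
  next
    case False
    then obtain a b where ab: "(a, b) \<notin> A \<times> B" "h (a, b) \<noteq> d" by auto
    have "pmf ?Q ?G = 0"
    proof (cases "b \<in> B")
      case True
      with ab have "pmf (Pi_pmf A d (\<lambda>a. p (a, b))) (?G b) = 0"
        by (intro pmf_Pi_outside) (auto simp: A)
      with True show ?thesis
        by (subst pmf_Pi) (auto simp: B)
    qed (use ab in \<open>auto simp: B fun_eq_iff intro!: pmf_Pi_outside\<close>)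
    with False show ?thesis
      by (simp add: pmf_Pi_outside A B)
  qed
  finally show "pmf (Pi_pmf (A \<times> B) d p) h = pmf (map_pmf ?F ?Q) h" ..
qed

lemma expectation_Pi_pmf_mult_centered:
  fixes P :: "'a \<Rightarrow> real pmf" and g :: "('a \<Rightarrow> real) \<Rightarrow> real"
  assumes D: "finite D" and "x \<in> D"
    and g: "\<And>f y. g (f(x := y)) = g f"
    and centered: "measure_pmf.expectation (P x) (\<lambda>y. y) = 0"
    and fin: "\<And>z. finite (set_pmf (P z))"
  shows "measure_pmf.expectation (Pi_pmf D d P) (\<lambda>f. g f * f x) = 0"
proof -
  define Q where "Q = Pi_pmf (D - {x}) d P"
  have Q: "finite (set_pmf Q)"
    unfolding Q_def using D fin by (intro finite_set_Pi_pmf) auto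
  have "Pi_pmf D d P = map_pmf (\<lambda>(y, f). f(x := y)) (pair_pmf (P x) Q)"
    unfolding Q_def using D \<open>x \<in> D\<close> by (subst Pi_pmf_insert [symmetric]) (auto simp: insert_absorb)
  then have "measure_pmf.expectation (Pi_pmf D d P) (\<lambda>f. g f * f x)
      = measure_pmf.expectation (pair_pmf (P x) Q) (\<lambda>z. fst z * g (snd z))"
    by (simp add: case_prod_beta g mult.commute)
  also have "\<dots> = (\<Sum>z\<in>set_pmf (P x) \<times> set_pmf Q. pmf (pair_pmf (P x) Q) z * (fst z * g (snd z)))"
    by (subst integral_measure_pmf[where A = "set_pmf (P x) \<times> set_pmf Q"]) (auto simp: fin Q)
  also have "\<dots> = (\<Sum>y\<in>set_pmf (P x). \<Sum>f\<in>set_pmf Q. (pmf (P x) y * y) * (pmf Q f * g f))"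
    by (subst sum.cartesian_product) (auto simp: pmf_pair intro!: sum.cong)
  also have "\<dots> = (\<Sum>y\<in>set_pmf (P x). pmf (P x) y * y) * (\<Sum>f\<in>set_pmf Q. pmf Q f * g f)"
    by (simp add: sum_product)
  also have "(\<Sum>y\<in>set_pmf (P x). pmf (P x) y * y) = 0"
    using centered by (subst (asm) integral_measure_pmf[where A = "set_pmf (P x)"]) (auto simp: fin)
  finally show ?thesis by simp
qed

lemma prob_Pi_pmf_card_less:
  fixes p :: "'a pmf"
  shows "measure_pmf.prob (Pi_pmf {..<N} d (\<lambda>_. p)) {g. card {i. i < N \<and> g i \<in> A} < k}
           \<le> exp (real k - real N * measure_pmf.prob p A / 2)"
proof -
  define q where "q = measure_pmf.prob p A"
  have bounded: "integrable (measure_pmf M) f" if "\<And>x. \<bar>f x\<bar> \<le> B" for M and f :: "_ \<Rightarrow> real" and B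
    using that by (intro measure_pmf.integrable_const_bound[where B = B]) auto
  have markov: "indicator {g. card {i. i < N \<and> g i \<in> A} < k} g
      \<le> exp (real k) * (\<Prod>i<N. exp (- indicator A (g i)))" for g :: "nat \<Rightarrow> 'a"
  proof -
    have "(\<Sum>i<N. indicator A (g i) :: real) = real (card {i. i < N \<and> g i \<in> A})"
      by (simp add: indicator_def sum.If_cases Int_def conj_commute)
    then have "(\<Prod>i<N. exp (- indicator A (g i))) = exp (- real (card {i. i < N \<and> g i \<in> A}))"
      by (simp add: sum_negf flip: exp_sum)
    then show ?thesis
      by (auto simp: indicator_def simp flip: exp_add)
  qed
  have coordinate: "measure_pmf.expectation p (\<lambda>v. exp (- indicator A v)) \<le> exp (- q / 2 :: real)"
  proof -
    have "exp (- 1 :: real) \<le> 1 / 2"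
      using exp_ge_add_one_self[of 1] by (simp add: exp_minus field_simps)
    then have "measure_pmf.expectation p (\<lambda>v. exp (- indicator A v))
        \<le> measure_pmf.expectation p (\<lambda>v. 1 - indicator A v / 2 :: real)"
      by (intro integral_mono bounded[of _ 1]) (auto simp: indicator_def)
    also have "\<dots> = 1 - q / 2"
      by (simp add: q_def bounded[of _ 1])
    also have "\<dots> \<le> exp (- q / 2)"
      using exp_ge_add_one_self[of "- q / 2"] by simp
    finally show ?thesis .
  qed
  have int: "integrable (Pi_pmf {..<N} d (\<lambda>_. p)) (\<lambda>g. \<Prod>i<N. exp (- indicator A (g i) :: real))"
    by (intro integrable_prod_Pi_pmf bounded[of _ 1]) (auto simp: indicator_def)
  have "measure_pmf.prob (Pi_pmf {..<N} d (\<lambda>_. p)) {g. card {i. i < N \<and> g i \<in> A} < k}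
      = measure_pmf.expectation (Pi_pmf {..<N} d (\<lambda>_. p)) (indicator {g. card {i. i < N \<and> g i \<in> A} < k})"
    by simp
  also have "\<dots> \<le> measure_pmf.expectation (Pi_pmf {..<N} d (\<lambda>_. p))
           (\<lambda>g. exp (real k) * (\<Prod>i<N. exp (- indicator A (g i))))"
    by (intro integral_mono markov integrable_mult_right int bounded[of _ 1]) (auto simp: indicator_def)
  also have "\<dots> = exp (real k) * (\<Prod>i<N. measure_pmf.expectation p (\<lambda>v. exp (- indicator A v)))"
    by (subst integral_mult_right_zero, subst expectation_prod_Pi_pmf)
       (auto intro: bounded[of _ 1] simp: indicator_def)
  also have "\<dots> \<le> exp (real k) * (\<Prod>i<N. exp (- q / 2))"
    using coordinate by (intro mult_left_mono prod_mono conjI integral_nonneg) auto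
  also have "\<dots> = exp (real k - real N * q / 2)"
    by (simp flip: exp_of_nat_mult exp_add add: field_simps)
  finally show ?thesis by (simp add: q_def)
qed

lemma expectation_kth_largest_Pi_pmf_ge:
  fixes p :: "real pmf"
  assumes p: "finite (set_pmf p)" and k: "1 \<le> k" "k \<le> N" and "\<theta> > 0"
  shows "a - (\<bar>a\<bar> + \<theta> / 2) * exp (real k - real N * measure_pmf.prob p {v. a \<le> v} / 2)
           - real N * measure_pmf.expectation p (\<lambda>v. v^2) / (2 * \<theta>)
         \<le> measure_pmf.expectation (Pi_pmf {..<N} 0 (\<lambda>_. p)) (kth_largest N k)"
proof -
  let ?P = "Pi_pmf {..<N} 0 (\<lambda>_. p)"
  define F where "F = {g. card {i. i < N \<and> g i \<in> {v. a \<le> v}} < k}"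
  have int: "integrable (measure_pmf ?P) f" for f :: "_ \<Rightarrow> real"
    by (intro integrable_measure_pmf_finite finite_set_Pi_pmf p) auto
  have marginal: "measure_pmf.expectation ?P (\<lambda>g. g i ^ 2) = measure_pmf.expectation p (\<lambda>v. v^2)"
    if "i < N" for i
  proof -
    have "measure_pmf.expectation ?P (\<lambda>g. g i ^ 2)
        = measure_pmf.expectation (map_pmf (\<lambda>g. g i) ?P) (\<lambda>v. v^2)"
      by simp
    also have "map_pmf (\<lambda>g. g i) ?P = p"
      using that by (subst Pi_pmf_component) auto
    finally show ?thesis .
  qed
  have "(a + \<theta> / 2) * measure_pmf.prob ?P F \<le> (\<bar>a\<bar> + \<theta> / 2) * measure_pmf.prob ?P F"
    by (intro mult_right_mono) auto
  also have "\<dots> \<le> (\<bar>a\<bar> + \<theta> / 2) * exp (real k - real N * measure_pmf.prob p {v. a \<le> v} / 2)"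
    unfolding F_def using \<open>\<theta> > 0\<close> by (intro mult_left_mono prob_Pi_pmf_card_less) auto
  finally have mass: "(a + \<theta> / 2) * measure_pmf.prob ?P F
      \<le> (\<bar>a\<bar> + \<theta> / 2) * exp (real k - real N * measure_pmf.prob p {v. a \<le> v} / 2)" .
  have "measure_pmf.expectation ?P (\<lambda>g. a - (a + \<theta> / 2) * indicator F g - (\<Sum>i<N. g i ^ 2 / (2 * \<theta>)))
      = a - (a + \<theta> / 2) * measure_pmf.prob ?P F - (\<Sum>i<N. measure_pmf.expectation ?P (\<lambda>g. g i ^ 2) / (2 * \<theta>))"
    by (simp add: int Bochner_Integration.integral_diff Bochner_Integration.integral_sum)
  also have "(\<Sum>i<N. measure_pmf.expectation ?P (\<lambda>g. g i ^ 2) / (2 * \<theta>))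
      = real N * measure_pmf.expectation p (\<lambda>v. v^2) / (2 * \<theta>)"
    by (simp add: marginal)
  finally have "a - (\<bar>a\<bar> + \<theta> / 2) * exp (real k - real N * measure_pmf.prob p {v. a \<le> v} / 2)
           - real N * measure_pmf.expectation p (\<lambda>v. v^2) / (2 * \<theta>)
      \<le> measure_pmf.expectation ?P (\<lambda>g. a - (a + \<theta> / 2) * indicator F g - (\<Sum>i<N. g i ^ 2 / (2 * \<theta>)))"
    using mass by linarith
  also have "\<dots> \<le> measure_pmf.expectation ?P (kth_largest N k)"
    using kth_largest_lower_bound[OF k \<open>\<theta> > 0\<close>]
    by (intro integral_mono int) (simp add: F_def indicator_def)
  finally show ?thesis .
qed

section \<open>Rademacher sums\<close>

text \<open>A lower bound on an upper tail from the moment generating function: \<open>exp (l v)\<close> is dominated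
  by \<open>exp (m a) exp ((l - m) v)\<close> below \<open>a\<close>, by \<open>exp (l b)\<close> on \<open>[a, b]\<close> and by
  \<open>exp (- m b) exp ((l + m) v)\<close> above \<open>b\<close>.\<close>

lemma prob_ge_exp_tilting:
  fixes W :: "real pmf"
  assumes W: "finite (set_pmf W)" and "0 \<le> l" "0 \<le> m"
  defines "M \<equiv> \<lambda>\<theta>. measure_pmf.expectation W (\<lambda>v. exp (\<theta> * v))"
  shows "exp (- l * b) * (M l - exp (m * a) * M (l - m) - exp (- m * b) * M (l + m))
           \<le> measure_pmf.prob W {v. a \<le> v}"
proof -
  have split: "exp (l * v) \<le> exp (m * a) * exp ((l - m) * v) + exp (l * b) * indicator {v. a \<le> v} v
                 + exp (- m * b) * exp ((l + m) * v)" for v :: real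
  proof -
    consider "v < a" | "a \<le> v" "v \<le> b" | "b < v" by linarith
    then show ?thesis
    proof cases
      case 1
      then have "m * v \<le> m * a"
        using \<open>0 \<le> m\<close> by (simp add: mult_left_mono)
      then have "exp (l * v) \<le> exp (m * a) * exp ((l - m) * v)"
        by (simp flip: exp_add add: algebra_simps)
      then show ?thesis by (simp add: add_nonneg_nonneg add_increasing2)
    next
      case 2
      then show ?thesis
        using \<open>0 \<le> l\<close> by (simp add: mult_left_mono add_increasing add_increasing2)
    next
      case 3
      then have "m * b \<le> m * v"
        using \<open>0 \<le> m\<close> by (simp add: mult_left_mono)
      then have "exp (l * v) \<le> exp (- m * b) * exp ((l + m) * v)"
        by (simp flip: exp_add add: algebra_simps)
      then show ?thesis by (simp add: add_increasing)
    qed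
  qed
  have int: "integrable (measure_pmf W) f" for f :: "real \<Rightarrow> real"
    by (rule integrable_measure_pmf_finite[OF W])
  have "M l \<le> measure_pmf.expectation W (\<lambda>v. exp (m * a) * exp ((l - m) * v)
      + exp (l * b) * indicator {v. a \<le> v} v + exp (- m * b) * exp ((l + m) * v))"
    unfolding M_def by (intro integral_mono int split)
  also have "\<dots> = exp (m * a) * M (l - m) + exp (l * b) * measure_pmf.prob W {v. a \<le> v}
      + exp (- m * b) * M (l + m)"
    by (simp add: M_def int)
  finally show ?thesis
    by (simp add: field_simps exp_minus)
qed

definition rademacher_sum :: "('a \<Rightarrow> real) \<Rightarrow> 'a set \<Rightarrow> real pmf" where
  "rademacher_sum \<sigma> J = map_pmf (\<lambda>c. \<Sum>j\<in>J. c j) (Pi_pmf J 0 (\<lambda>j. pmf_of_set {- \<sigma> j, \<sigma> j}))"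

lemma finite_set_rademacher_sum: "finite J \<Longrightarrow> finite (set_pmf (rademacher_sum \<sigma> J))"
  unfolding rademacher_sum_def by (auto intro!: finite_imageI finite_set_Pi_pmf)

lemma rademacher_sum_uminus:
  assumes "finite J"
  shows "map_pmf uminus (rademacher_sum \<sigma> J) = rademacher_sum \<sigma> J"
proof -
  have sym: "map_pmf uminus (pmf_of_set {- s, s}) = pmf_of_set {- s, s :: real}" for s
    by (subst map_pmf_of_set_inj) (auto simp: insert_commute)
  have "map_pmf uminus (rademacher_sum \<sigma> J) =
      map_pmf (\<lambda>c. \<Sum>j\<in>J. c j) (map_pmf ((\<circ>) uminus) (Pi_pmf J 0 (\<lambda>j. pmf_of_set {- \<sigma> j, \<sigma> j})))"
    by (simp add: rademacher_sum_def pmf.map_comp o_def sum_negf)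
  also have "map_pmf ((\<circ>) uminus) (Pi_pmf J 0 (\<lambda>j. pmf_of_set {- \<sigma> j, \<sigma> j})) =
      Pi_pmf J 0 (\<lambda>j. pmf_of_set {- \<sigma> j, \<sigma> j})"
    using Pi_pmf_map[OF assms, of uminus 0 0 "\<lambda>j. pmf_of_set {- \<sigma> j, \<sigma> j}"] by (simp add: sym)
  finally show ?thesis by (simp add: rademacher_sum_def)
qed

lemma expectation_exp_rademacher_sum:
  assumes "finite J"
  shows "measure_pmf.expectation (rademacher_sum \<sigma> J) (\<lambda>v. exp (\<theta> * v)) = (\<Prod>j\<in>J. cosh (\<theta> * \<sigma> j))"
proof -
  have coin: "measure_pmf.expectation (pmf_of_set {- s, s}) (\<lambda>v. exp (\<theta> * v)) = cosh (\<theta> * s)" for s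
    by (cases "s = 0") (auto simp: integral_pmf_of_set cosh_field_def)
  have "measure_pmf.expectation (rademacher_sum \<sigma> J) (\<lambda>v. exp (\<theta> * v)) =
      measure_pmf.expectation (Pi_pmf J 0 (\<lambda>j. pmf_of_set {- \<sigma> j, \<sigma> j})) (\<lambda>c. \<Prod>j\<in>J. exp (\<theta> * c j))"
    by (simp add: rademacher_sum_def sum_distrib_left exp_sum assms)
  also have "\<dots> = (\<Prod>j\<in>J. cosh (\<theta> * \<sigma> j))"
    by (subst expectation_prod_Pi_pmf) (auto simp: assms coin intro: integrable_measure_pmf_finite)
  finally show ?thesis .
qed

lemma expectation_exp_rademacher_sum_le:
  assumes "finite J"
  shows "measure_pmf.expectation (rademacher_sum \<sigma> J) (\<lambda>v. exp (\<theta> * v))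
           \<le> exp (\<theta>^2 * (\<Sum>j\<in>J. \<sigma> j ^ 2) / 2)"
proof -
  have "(\<Prod>j\<in>J. cosh (\<theta> * \<sigma> j)) \<le> (\<Prod>j\<in>J. exp ((\<theta> * \<sigma> j)^2 / 2))"
    by (intro prod_mono) (auto simp: cosh_le_exp_half_square)
  also have "\<dots> = exp (\<theta>^2 * (\<Sum>j\<in>J. \<sigma> j ^ 2) / 2)"
    by (simp add: exp_sum assms power_mult_distrib sum_distrib_left sum_divide_distrib)
  finally show ?thesis
    by (simp add: expectation_exp_rademacher_sum assms)
qed

lemma expectation_exp_rademacher_sum_ge:
  assumes "finite J" "\<And>j. j \<in> J \<Longrightarrow> (\<theta> * \<sigma> j)^2 / 2 \<le> 1"
  shows "exp (\<theta>^2 * (\<Sum>j\<in>J. \<sigma> j ^ 2) / 2 - \<theta>^4 * (\<Sum>j\<in>J. \<sigma> j ^ 4) / 4)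
           \<le> measure_pmf.expectation (rademacher_sum \<sigma> J) (\<lambda>v. exp (\<theta> * v))"
proof -
  have "exp (\<theta>^2 * (\<Sum>j\<in>J. \<sigma> j ^ 2) / 2 - \<theta>^4 * (\<Sum>j\<in>J. \<sigma> j ^ 4) / 4)
      = (\<Prod>j\<in>J. exp ((\<theta> * \<sigma> j)^2 / 2 - (\<theta> * \<sigma> j)^4 / 4))"
    by (simp add: exp_sum [symmetric] assms power_mult_distrib sum_distrib_left
        sum_divide_distrib sum_subtractf)
  also have "\<dots> \<le> (\<Prod>j\<in>J. cosh (\<theta> * \<sigma> j))"
    by (intro prod_mono) (auto intro: exp_half_square_minus_le_cosh assms)
  finally show ?thesis
    by (simp add: expectation_exp_rademacher_sum assms)
qed

lemma expectation_exp_rademacher_sum_scaled_ge: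
  fixes \<sigma> :: "'a \<Rightarrow> real" and J :: "'a set"
  defines "S \<equiv> \<Sum>j\<in>J. \<sigma> j ^ 2"
  assumes J: "finite J" and "0 < S" and \<sigma>_le: "\<And>j. j \<in> J \<Longrightarrow> \<sigma> j ^ 2 \<le> \<beta>"
    and y2: "y^2 * \<beta> \<le> S" and y4: "4 * y^4 * \<beta> \<le> S"
  shows "exp (y^2 / 2 - 1 / 16) \<le> measure_pmf.expectation (rademacher_sum \<sigma> J) (\<lambda>v. exp (y / sqrt S * v))"
proof -
  define s where "s = sqrt S"
  have s: "0 < s" "s^2 = S"
    using \<open>0 < S\<close> by (simp_all add: s_def)
  have small: "(y / s * \<sigma> j)^2 / 2 \<le> 1" if "j \<in> J" for j
  proof -
    have "y^2 * \<sigma> j ^ 2 \<le> y^2 * \<beta>"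
      using \<sigma>_le[OF that] by (simp add: mult_left_mono)
    then have "y^2 * \<sigma> j ^ 2 \<le> S" using y2 by linarith
    then show ?thesis
      using s \<open>0 < S\<close> by (simp add: power_mult_distrib power_divide field_simps)
  qed
  have "(\<Sum>j\<in>J. \<sigma> j ^ 4) \<le> (\<Sum>j\<in>J. \<beta> * \<sigma> j ^ 2)"
  proof (intro sum_mono)
    fix j assume "j \<in> J"
    then have "\<sigma> j ^ 2 * \<sigma> j ^ 2 \<le> \<beta> * \<sigma> j ^ 2"
      using \<sigma>_le by (intro mult_right_mono) auto
    then show "\<sigma> j ^ 4 \<le> \<beta> * \<sigma> j ^ 2"
      by (simp flip: power_add)
  qed
  also have "\<dots> = \<beta> * S" by (simp add: S_def sum_distrib_left)
  finally have fourth: "(\<Sum>j\<in>J. \<sigma> j ^ 4) \<le> \<beta> * S" .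
  have "s^4 = S^2"
    by (simp flip: s(2) power_mult)
  then have "(y / s)^4 * (\<Sum>j\<in>J. \<sigma> j ^ 4) / 4 \<le> y^4 / S^2 * (\<beta> * S) / 4"
    using fourth by (simp add: power_divide mult_left_mono divide_right_mono)
  also have "\<dots> = y^4 * \<beta> / (4 * S)"
    using \<open>0 < S\<close> by (simp add: power2_eq_square)
  also have "\<dots> \<le> 1 / 16"
    using y4 \<open>0 < S\<close> by (simp add: field_simps)
  finally have "y^2 / 2 - 1 / 16 \<le> (y / s)^2 * S / 2 - (y / s)^4 * (\<Sum>j\<in>J. \<sigma> j ^ 4) / 4"
    using s \<open>0 < S\<close> by (simp add: power_divide)
  then have "exp (y^2 / 2 - 1 / 16)
      \<le> exp ((y / s)^2 * S / 2 - (y / s)^4 * (\<Sum>j\<in>J. \<sigma> j ^ 4) / 4)"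
    by simp
  also have "\<dots> \<le> measure_pmf.expectation (rademacher_sum \<sigma> J) (\<lambda>v. exp (y / s * v))"
    using expectation_exp_rademacher_sum_ge[OF J small] by (simp add: S_def)
  finally show ?thesis
    by (simp add: s_def)
qed

lemma rademacher_sum_tail_ge:
  fixes \<sigma> :: "'a \<Rightarrow> real" and J :: "'a set"
  defines "S \<equiv> \<Sum>j\<in>J. \<sigma> j ^ 2"
  assumes J: "finite J" and "0 < S" and \<sigma>_le: "\<And>j. j \<in> J \<Longrightarrow> \<sigma> j ^ 2 \<le> \<beta>"
    and "0 \<le> y" and y2: "y^2 * \<beta> \<le> S" and y4: "4 * y^4 * \<beta> \<le> S"
  shows "exp (- (y^2) / 2 - 2 * y) / 2
           \<le> measure_pmf.prob (rademacher_sum \<sigma> J) {v. (y - 2) * sqrt S \<le> v}"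
proof -
  define s where "s = sqrt S"
  have s: "0 < s" "s^2 = S"
    using \<open>0 < S\<close> by (simp_all add: s_def)
  define M where "M \<theta> = measure_pmf.expectation (rademacher_sum \<sigma> J) (\<lambda>v. exp (\<theta> * v))" for \<theta>
  \<comment> \<open>Tilting at \<open>l = y / s\<close> with \<open>m = 2 / s\<close>, \<open>a = (y - 2) s\<close>, \<open>b = (y + 2) s\<close>: both side terms
    are at most \<open>exp (-2)\<close> times the centre term.\<close>
  have M_side: "exp (c * (y - c)) * M ((y - c) / s) \<le> exp (y^2 / 2 - 2)" if "c^2 = 4" for c
  proof -
    have "M ((y - c) / s) \<le> exp ((y - c)^2 / 2)"
      using expectation_exp_rademacher_sum_le[OF J, of \<sigma> "(y - c) / s"] s \<open>0 < S\<close>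
      by (simp add: M_def S_def[symmetric] power_divide)
    then have "exp (c * (y - c)) * M ((y - c) / s) \<le> exp (c * (y - c) + (y - c)^2 / 2)"
      by (simp add: exp_add)
    also have "c * (y - c) + (y - c)^2 / 2 = y^2 / 2 - 2"
      using that by (simp add: power2_eq_square field_simps)
    finally show ?thesis .
  qed
  have "1 / 2 \<le> exp (- 1 / 16 :: real) - 2 * exp (- 2)"
  proof -
    have "5 \<le> exp (2::real)"
      using exp_lower_Taylor_quadratic[of 2] by simp
    then have "exp (- 2 :: real) \<le> 1 / 5"
      by (simp add: exp_minus field_simps)
    moreover have "1 + (- 1 / 16) \<le> exp (- 1 / 16 :: real)"
      by (rule exp_ge_add_one_self)
    ultimately show ?thesis by linarith
  qed
  then have "exp (y^2 / 2) / 2 \<le> exp (y^2 / 2) * (exp (- 1 / 16) - 2 * exp (- 2))"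
    by simp
  also have "\<dots> = exp (y^2 / 2 - 1 / 16) - 2 * exp (y^2 / 2 - 2)"
    by (simp add: algebra_simps flip: exp_add)
  also have "\<dots> \<le> M (y / s) - exp (2 * (y - 2)) * M ((y - 2) / s) - exp (- 2 * (y + 2)) * M ((y + 2) / s)"
    using expectation_exp_rademacher_sum_scaled_ge[OF J \<open>0 < S\<close>[unfolded S_def] \<sigma>_le
        y2[unfolded S_def] y4[unfolded S_def]] M_side[of 2] M_side[of "- 2"]
    by (simp add: M_def s_def S_def)
  finally have tilted: "exp (- (y^2) - 2 * y) * (exp (y^2 / 2) / 2) \<le> exp (- (y^2) - 2 * y) *
      (M (y / s) - exp (2 * (y - 2)) * M ((y - 2) / s) - exp (- 2 * (y + 2)) * M ((y + 2) / s))"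
    by (intro mult_left_mono) auto
  have "exp (- (y^2) / 2 - 2 * y) / 2 = exp (- (y^2) - 2 * y) * (exp (y^2 / 2) / 2)"
    by (simp flip: exp_add)
  also have "\<dots> \<le> measure_pmf.prob (rademacher_sum \<sigma> J) {v. (y - 2) * s \<le> v}"
    using tilted prob_ge_exp_tilting[OF finite_set_rademacher_sum[OF J, of \<sigma>],
        where l = "y / s" and m = "2 / s" and a = "(y - 2) * s" and b = "(y + 2) * s"]
      \<open>0 \<le> y\<close> s
    by (simp add: M_def diff_divide_distrib add_divide_distrib power2_eq_square algebra_simps)
  finally show ?thesis by (simp add: s_def)
qed

lemma expectation_square_rademacher_sum_le:
  fixes \<sigma> :: "'a \<Rightarrow> real" and J :: "'a set"
  defines "S \<equiv> \<Sum>j\<in>J. \<sigma> j ^ 2"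
  assumes J: "finite J" and "0 < S"
  shows "measure_pmf.expectation (rademacher_sum \<sigma> J) (\<lambda>v. v^2) \<le> 4 * S"
proof -
  define s where "s = sqrt S"
  have s: "0 < s" "s^2 = S"
    using \<open>0 < S\<close> by (simp_all add: s_def)
  have int: "integrable (measure_pmf (rademacher_sum \<sigma> J)) f" for f :: "real \<Rightarrow> real"
    by (intro integrable_measure_pmf_finite finite_set_rademacher_sum J)
  have square_le: "v^2 \<le> S * (exp (1 / s * v) + exp (- 1 / s * v))" for v
  proof -
    have "(v / s)^2 \<le> exp (v / s) + exp (- (v / s))"
      using one_plus_half_square_le_cosh[of "v / s"] by (simp add: cosh_field_def)
    then have "S * (v / s)^2 \<le> S * (exp (v / s) + exp (- (v / s)))"
      using \<open>0 < S\<close> by (intro mult_left_mono) auto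
    then show ?thesis
      using s \<open>0 < S\<close> by (simp add: power_divide)
  qed
  have exp_half: "exp (1 / 2 :: real) \<le> 2"
  proof (rule power2_le_imp_le)
    show "exp (1 / 2 :: real) ^ 2 \<le> 2 ^ 2"
      using exp_le by (simp flip: exp_of_nat_mult)
  qed simp
  have "measure_pmf.expectation (rademacher_sum \<sigma> J) (\<lambda>v. v^2)
      \<le> S * (measure_pmf.expectation (rademacher_sum \<sigma> J) (\<lambda>v. exp (1 / s * v))
           + measure_pmf.expectation (rademacher_sum \<sigma> J) (\<lambda>v. exp (- 1 / s * v)))"
    using integral_mono[OF int int square_le] by (simp add: int)
  also have "\<dots> \<le> S * (exp (1 / 2) + exp (1 / 2))"
    using expectation_exp_rademacher_sum_le[OF J, of \<sigma> "1 / s"]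
      expectation_exp_rademacher_sum_le[OF J, of \<sigma> "- 1 / s"] s \<open>0 < S\<close>
    by (intro mult_left_mono add_mono) (auto simp: S_def[symmetric] power_divide)
  also have "\<dots> \<le> 4 * S"
    using exp_half \<open>0 < S\<close> by simp
  finally show ?thesis .
qed

lemma expectation_kth_largest_rademacher_ge:
  fixes \<sigma> :: "'a \<Rightarrow> real" and J :: "'a set"
  defines "S \<equiv> \<Sum>j\<in>J. \<sigma> j ^ 2"
  assumes J: "finite J" and "0 < S" and \<sigma>_le: "\<And>j. j \<in> J \<Longrightarrow> \<sigma> j ^ 2 \<le> \<beta>"
    and "0 \<le> y" and y2: "y^2 * \<beta> \<le> S" and y4: "4 * y^4 * \<beta> \<le> S"
    and k: "1 \<le> k" "k \<le> N"
    and budget: "(y + 2 + 2 * real N) * exp (real k - real N * exp (- (y^2) / 2 - 2 * y) / 4) \<le> 1 / 2"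
  shows "(y - 3) * sqrt S \<le> measure_pmf.expectation (Pi_pmf {..<N} 0 (\<lambda>_. rademacher_sum \<sigma> J)) (kth_largest N k)"
proof -
  define s where "s = sqrt S"
  have s: "0 < s" "s^2 = S"
    using \<open>0 < S\<close> by (simp_all add: s_def)
  define a where "a = (y - 2) * s"
  \<comment> \<open>This choice makes the second-moment penalty of the order statistic equal to \<open>s / 2\<close>.\<close>
  define \<theta> where "\<theta> = 4 * real N * s"
  have "\<theta> > 0"
    using k s by (simp add: \<theta>_def)
  define q where "q = measure_pmf.prob (rademacher_sum \<sigma> J) {v. a \<le> v}"
  have "exp (- (y^2) / 2 - 2 * y) / 2 \<le> q"
    unfolding q_def a_def s_def S_def by (rule rademacher_sum_tail_ge[OF J _ \<sigma>_le]) (use assms in auto)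
  then have "real N * (exp (- (y^2) / 2 - 2 * y) / 2) \<le> real N * q"
    by (intro mult_left_mono) auto
  then have tail: "exp (real k - real N * q / 2) \<le> exp (real k - real N * exp (- (y^2) / 2 - 2 * y) / 4)"
    by simp
  have coefficient: "\<bar>a\<bar> + \<theta> / 2 \<le> (y + 2 + 2 * real N) * s"
  proof -
    have "\<bar>a\<bar> = \<bar>y - 2\<bar> * s"
      using s by (simp add: a_def abs_mult)
    moreover have "\<bar>y - 2\<bar> * s \<le> (y + 2) * s"
      using s \<open>0 \<le> y\<close> by (intro mult_right_mono) auto
    ultimately show ?thesis
      by (simp add: \<theta>_def algebra_simps)
  qed
  have "(\<bar>a\<bar> + \<theta> / 2) * exp (real k - real N * q / 2)
      \<le> ((y + 2 + 2 * real N) * s) * exp (real k - real N * exp (- (y^2) / 2 - 2 * y) / 4)"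
    using coefficient tail s \<open>0 \<le> y\<close> by (intro mult_mono) auto
  also have "\<dots> = s * ((y + 2 + 2 * real N) * exp (real k - real N * exp (- (y^2) / 2 - 2 * y) / 4))"
    by (simp only: mult_ac)
  also have "\<dots> \<le> s / 2"
    using budget s by (simp add: mult_left_mono)
  finally have outside: "(\<bar>a\<bar> + \<theta> / 2) * exp (real k - real N * q / 2) \<le> s / 2" .
  have "real N * measure_pmf.expectation (rademacher_sum \<sigma> J) (\<lambda>v. v^2) / (2 * \<theta>)
      \<le> real N * (4 * S) / (2 * \<theta>)"
    using expectation_square_rademacher_sum_le[OF J] \<open>0 < S\<close> \<open>\<theta> > 0\<close>
    by (intro divide_right_mono mult_left_mono) (auto simp: S_def)
  also have "\<dots> = s / 2"
    using s k by (simp add: \<theta>_def field_simps power2_eq_square)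
  finally have spread: "real N * measure_pmf.expectation (rademacher_sum \<sigma> J) (\<lambda>v. v^2) / (2 * \<theta>) \<le> s / 2" .
  have "a - (\<bar>a\<bar> + \<theta> / 2) * exp (real k - real N * q / 2)
      - real N * measure_pmf.expectation (rademacher_sum \<sigma> J) (\<lambda>v. v^2) / (2 * \<theta>)
      \<le> measure_pmf.expectation (Pi_pmf {..<N} 0 (\<lambda>_. rademacher_sum \<sigma> J)) (kth_largest N k)"
    unfolding q_def by (intro expectation_kth_largest_Pi_pmf_ge finite_set_rademacher_sum J k \<open>\<theta> > 0\<close>)
  with outside spread have "a - s \<le> measure_pmf.expectation (Pi_pmf {..<N} 0 (\<lambda>_. rademacher_sum \<sigma> J)) (kth_largest N k)"
    by linarith
  then show ?thesis
    by (simp add: a_def s_def algebra_simps)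
qed

section \<open>The random-walk adversary\<close>

lemma expectation_algorithm_loss_eq_0:
  assumes valid: "valid_algorithm N alg"
    and fin: "\<And>z. finite (set_pmf (P z))"
    and centered: "\<And>z. measure_pmf.expectation (P z) (\<lambda>v. v) = 0"
  shows "measure_pmf.expectation (Pi_pmf ({1..T} \<times> {..<N}) 0 P)
           (\<lambda>L. \<Sum>j=1..T. \<Sum>k<N. alg j L k * L (j, k)) = 0"
proof -
  define \<Omega> where "\<Omega> = Pi_pmf ({1..T} \<times> {..<N}) 0 P"
  have int: "integrable (measure_pmf \<Omega>) f" for f :: "_ \<Rightarrow> real"
    unfolding \<Omega>_def by (intro integrable_measure_pmf_finite finite_set_Pi_pmf fin) auto
  have zero: "measure_pmf.expectation \<Omega> (\<lambda>L. alg j L k * L (j, k)) = 0"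
    if "j \<in> {1..T}" "k < N" for j k
    unfolding \<Omega>_def
  proof (rule expectation_Pi_pmf_mult_centered)
    show "alg j (L((j, k) := y)) k = alg j L k" for L y
      using valid unfolding valid_algorithm_def by (metis fun_upd_other nat_less_le prod.inject)
  qed (use that fin centered in auto)
  have "measure_pmf.expectation \<Omega> (\<lambda>L. \<Sum>j=1..T. \<Sum>k<N. alg j L k * L (j, k))
      = (\<Sum>j=1..T. \<Sum>k<N. measure_pmf.expectation \<Omega> (\<lambda>L. alg j L k * L (j, k)))"
    by (simp add: int Bochner_Integration.integral_sum)
  also have "\<dots> = 0"
    by (intro sum.neutral ballI) (simp add: zero)
  finally show ?thesis
    by (simp add: \<Omega>_def)
qed

lemma random_walk_losses_neg_cumulative:
  "map_pmf (\<lambda>L i. - (\<Sum>j=1..T. L (j, i))) (random_walk_losses \<sigma> N T)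
     = Pi_pmf {..<N} 0 (\<lambda>_. rademacher_sum \<sigma> {1..T})"
proof -
  define C where "C = Pi_pmf {1..T} 0 (\<lambda>j. pmf_of_set {- \<sigma> j, \<sigma> j})"
  define f where "f = (\<lambda>c :: nat \<Rightarrow> real. - (\<Sum>j=1..T. c j))"
  have "random_walk_losses \<sigma> N T = map_pmf (\<lambda>g (j, i). g i j) (Pi_pmf {..<N} (\<lambda>_. 0) (\<lambda>_. C))"
    unfolding random_walk_losses_def C_def by (subst Pi_pmf_Times) auto
  then have "map_pmf (\<lambda>L i. - (\<Sum>j=1..T. L (j, i))) (random_walk_losses \<sigma> N T)
      = map_pmf (\<lambda>h. f \<circ> h) (Pi_pmf {..<N} (\<lambda>_. 0) (\<lambda>_. C))"
    by (simp add: pmf.map_comp o_def f_def)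
  also have "\<dots> = Pi_pmf {..<N} 0 (\<lambda>_. map_pmf f C)"
    by (rule Pi_pmf_map [symmetric]) (auto simp: f_def)
  also have "map_pmf f C = rademacher_sum \<sigma> {1..T}"
    using rademacher_sum_uminus[of "{1..T}" \<sigma>]
    by (simp add: rademacher_sum_def C_def f_def pmf.map_comp o_def)
  finally show ?thesis .
qed

lemma expectation_kth_largest_regret:
  assumes valid: "valid_algorithm N alg" and k: "1 \<le> k" "k \<le> N"
  shows "measure_pmf.expectation (random_walk_losses \<sigma> N T) (\<lambda>L. kth_largest N k (regret_vec N alg T L))
    = measure_pmf.expectation (Pi_pmf {..<N} 0 (\<lambda>_. rademacher_sum \<sigma> {1..T})) (kth_largest N k)"
proof -
  define A where "A L = (\<Sum>j=1..T. \<Sum>k<N. alg j L k * L (j, k))" for L :: "nat \<times> nat \<Rightarrow> real"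
  have int: "integrable (measure_pmf (random_walk_losses \<sigma> N T)) f" for f :: "_ \<Rightarrow> real"
    unfolding random_walk_losses_def
    by (intro integrable_measure_pmf_finite finite_set_Pi_pmf) (auto split: prod.split)
  define W where "W = (\<lambda>(L :: nat \<times> nat \<Rightarrow> real) i. - (\<Sum>j=1..T. L (j, i)))"
  have "regret_vec N alg T L = (\<lambda>i. A L + W L i)" for L
    by (simp add: regret_vec_def A_def W_def sum_subtractf fun_eq_iff)
  then have "measure_pmf.expectation (random_walk_losses \<sigma> N T) (\<lambda>L. kth_largest N k (regret_vec N alg T L))
      = measure_pmf.expectation (random_walk_losses \<sigma> N T) (\<lambda>L. A L + kth_largest N k (W L))"
    by (simp add: kth_largest_shift[OF k])
  also have "\<dots> = measure_pmf.expectation (random_walk_losses \<sigma> N T) A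
      + measure_pmf.expectation (random_walk_losses \<sigma> N T) (\<lambda>L. kth_largest N k (W L))"
    by (rule Bochner_Integration.integral_add[OF int int])
  also have "measure_pmf.expectation (random_walk_losses \<sigma> N T) A = 0"
    unfolding random_walk_losses_def A_def
  proof (rule expectation_algorithm_loss_eq_0[OF valid])
    have "measure_pmf.expectation (pmf_of_set {- s, s}) (\<lambda>v. v) = 0" for s :: real
      by (cases "s = 0") (auto simp: integral_pmf_of_set)
    then show "measure_pmf.expectation ((\<lambda>(j, i). pmf_of_set {- \<sigma> j, \<sigma> j}) z) (\<lambda>v. v) = 0" for z
      by (simp split: prod.split)
  qed (simp split: prod.split)
  also have "measure_pmf.expectation (random_walk_losses \<sigma> N T) (\<lambda>L. kth_largest N k (W L))
      = measure_pmf.expectation (map_pmf W (random_walk_losses \<sigma> N T)) (kth_largest N k)"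
    by simp
  also have "map_pmf W (random_walk_losses \<sigma> N T) = Pi_pmf {..<N} 0 (\<lambda>_. rademacher_sum \<sigma> {1..T})"
    unfolding W_def by (rule random_walk_losses_neg_cumulative)
  finally show ?thesis by simp
qed

section \<open>Choice of parameters\<close>

lemma not_summable_partial_sum_ge:
  fixes f :: "nat \<Rightarrow> real"
  assumes nonneg: "\<And>n. 0 \<le> f n" and "\<not> summable f"
  shows "\<exists>T\<ge>1. R \<le> (\<Sum>j=1..T. f j)"
proof (rule ccontr)
  assume "\<not> ?thesis"
  then have below: "(\<Sum>j=1..T. f j) < R" if "T \<ge> 1" for T
    using that by auto
  have "(\<Sum>j\<le>n. f j) \<le> f 0 + \<bar>R\<bar>" for n
  proof (cases "n = 0")
    case False
    have "(\<Sum>j\<le>n. f j) = f 0 + (\<Sum>j=1..n. f j)"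
      by (simp add: atMost_atLeast0 sum.atLeast_Suc_atMost)
    with below[of n] False show ?thesis by simp
  qed simp
  then have "summable f"
    by (rule bounded_imp_summable[OF nonneg])
  with \<open>\<not> summable f\<close> show False ..
qed

lemma sqrt_two_ln_bounds:
  fixes u :: real
  assumes "1000 < u"
  shows "3 \<le> sqrt (2 * ln u)" "sqrt (2 * ln u) \<le> u"
proof -
  have "exp (5::real) \<le> 3 ^ 5"
    using power_mono[OF exp_le, of 5] by (simp flip: exp_of_nat_mult)
  then have "ln (exp 5) < ln u"
    using assms by (subst ln_less_cancel_iff) auto
  then have "5 < ln u"
    by simp
  then show "3 \<le> sqrt (2 * ln u)"
    by (intro real_le_rsqrt) simp
  have "2 * u \<le> u * u"
    using assms by (intro mult_right_mono) auto
  then have "2 * ln u \<le> u^2"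
    using ln_le_minus_one[of u] assms unfolding power2_eq_square by linarith
  then show "sqrt (2 * ln u) \<le> u"
    using assms by (intro real_le_lsqrt) auto
qed

lemma square_mult_exp_neg_le:
  fixes u :: real
  assumes "1000 < u"
  shows "5 * u^2 * exp (- u) \<le> 1 / 2"
proof -
  have "u / 3 \<le> exp (u / 3)"
    using exp_ge_add_one_self[of "u / 3"] by linarith
  then have "(u / 3) ^ 3 \<le> exp (u / 3) ^ 3"
    using assms by (intro power_mono) auto
  also have "\<dots> = exp u"
    by (simp flip: exp_of_nat_mult)
  finally have "u^3 / 27 \<le> exp u"
    by (simp add: power_divide)
  moreover have "10 * u^2 * 27 \<le> u^3"
    using assms by (simp add: power2_eq_square power3_eq_cube mult_right_mono)
  ultimately show ?thesis
    by (simp add: exp_minus field_simps)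
qed

lemma exp_neg_half_square_shift_ge:
  fixes t :: real
  assumes "3 \<le> t"
  shows "8 * exp (- (t^2) / 2) \<le> exp (- ((t - 3)^2) / 2 - 2 * (t - 3))"
proof -
  have "8 \<le> exp (3::real)"
    using exp_lower_Taylor_quadratic[of 3] by simp
  also have "\<dots> \<le> exp (t + 3 / 2)"
    using assms by simp
  finally have "8 * exp (- (t^2) / 2) \<le> exp (t + 3 / 2) * exp (- (t^2) / 2)"
    by simp
  also have "\<dots> = exp (- ((t - 3)^2) / 2 - 2 * (t - 3))"
    by (simp flip: exp_add) (simp add: power2_eq_square field_simps)
  finally show ?thesis .
qed

lemma regret_parameters:
  fixes \<epsilon> y :: real and N k :: nat
  assumes "0 < \<epsilon>" "\<epsilon> < 1 / 1000"
  defines "N \<equiv> nat \<lceil>1 / \<epsilon>^2\<rceil>" and "k \<equiv> nat \<lfloor>real N * \<epsilon>\<rfloor>"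
    and "y \<equiv> sqrt (2 * ln (1 / \<epsilon>)) - 3"
  shows "1 / \<epsilon>^2 \<le> real N" "real N \<le> 2 / \<epsilon>^2" "1 \<le> k" "k \<le> N" "0 \<le> y"
    "(y + 2 + 2 * real N) * exp (real k - real N * exp (- (y^2) / 2 - 2 * y) / 4) \<le> 1 / 2"
proof -
  define u where "u = 1 / \<epsilon>"
  have u: "1000 < u" "1 / \<epsilon>^2 = u^2"
    using assms(1,2) by (simp_all add: u_def field_simps power_divide)
  have "1 \<le> u" "u \<le> u^2"
    using u(1) by (simp_all add: power2_eq_square)
  show N_lo: "1 / \<epsilon>^2 \<le> real N"
    unfolding N_def by (rule real_nat_ceiling_ge)
  have N_hi: "real N \<le> u^2 + 1"
    using ceiling_correct[of "u^2"] by (simp add: N_def u(2))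
  then show "real N \<le> 2 / \<epsilon>^2"
    using \<open>1 \<le> u\<close> \<open>u \<le> u^2\<close> u(2) by simp
  have "u^2 * \<epsilon> = u"
    using assms(1) by (simp add: u_def power2_eq_square)
  then have "u \<le> real N * \<epsilon>"
    using mult_right_mono[OF N_lo, of \<epsilon>] assms(1) u(2) by simp
  then show "1 \<le> k"
    using u(1) by (simp add: k_def le_nat_floor)
  have k_le: "real k \<le> real N * \<epsilon>"
    using assms(1) by (simp add: k_def)
  also have "\<dots> \<le> real N"
    using assms(1,2) by (intro mult_left_le) auto
  finally show "k \<le> N"
    by simp
  define t where "t = sqrt (2 * ln u)"
  have t: "3 \<le> t" "t \<le> u"
    using sqrt_two_ln_bounds[OF u(1)] by (simp_all add: t_def)
  have y_t: "y = t - 3"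
    by (simp add: y_def t_def u_def)
  then show "0 \<le> y"
    using t by simp
  have "t^2 = 2 * ln u"
    using u(1) by (simp add: t_def)
  then have "exp (- (t^2) / 2) = \<epsilon>"
    using u(1) assms(1) by (simp add: exp_minus u_def)
  then have "8 * \<epsilon> \<le> exp (- (y^2) / 2 - 2 * y)"
    using exp_neg_half_square_shift_ge[OF t(1)] by (simp add: y_t)
  then have "real N * (8 * \<epsilon>) \<le> real N * exp (- (y^2) / 2 - 2 * y)"
    by (intro mult_left_mono) auto
  with k_le \<open>u \<le> real N * \<epsilon>\<close>
  have exponent: "real k - real N * exp (- (y^2) / 2 - 2 * y) / 4 \<le> - u"
    by linarith
  have coefficient: "y + 2 + 2 * real N \<le> 5 * u^2"
    using t N_hi \<open>1 \<le> u\<close> \<open>u \<le> u^2\<close> y_t by linarith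
  have "(y + 2 + 2 * real N) * exp (real k - real N * exp (- (y^2) / 2 - 2 * y) / 4)
      \<le> 5 * u^2 * exp (- u)"
    using coefficient exponent by (intro mult_mono) auto
  also have "\<dots> \<le> 1 / 2"
    by (rule square_mult_exp_neg_le[OF u(1)])
  finally show "(y + 2 + 2 * real N) * exp (real k - real N * exp (- (y^2) / 2 - 2 * y) / 4) \<le> 1 / 2" .
qed

lemma regret_eps_lower_bound:
  fixes \<sigma> :: "nat \<Rightarrow> real" and B \<epsilon> :: real
  assumes pos: "\<And>j. j \<ge> 1 \<Longrightarrow> \<sigma> j > 0" and le: "\<And>j. j \<ge> 1 \<Longrightarrow> \<sigma> j \<le> B / 2"
    and diverges: "\<not> summable (\<lambda>j. (\<sigma> j)^2)" and \<epsilon>: "0 < \<epsilon>" "\<epsilon> < 1 / 1000"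
  shows "\<exists>N T::nat. 1 / \<epsilon>^2 \<le> real N \<and> real N \<le> 2 / \<epsilon>^2 \<and> T \<ge> 1 \<and>
           (\<forall>alg. valid_algorithm N alg \<longrightarrow>
              measure_pmf.expectation (random_walk_losses \<sigma> N T) (regret_eps N alg T \<epsilon>)
                / sqrt (\<Sum>j=1..T. (\<sigma> j)^2)
              \<ge> sqrt (2 * ln (1 / \<epsilon>)) - 6)"
proof -
  define N where "N = nat \<lceil>1 / \<epsilon>^2\<rceil>"
  define k where "k = nat \<lfloor>real N * \<epsilon>\<rfloor>"
  define y where "y = sqrt (2 * ln (1 / \<epsilon>)) - 3"
  note params = regret_parameters[OF \<epsilon>, folded N_def, folded k_def y_def]
  obtain T where T: "T \<ge> 1" "y^4 * B^2 + y^2 * B^2 + 1 \<le> (\<Sum>j=1..T. (\<sigma> j)^2)"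
    using not_summable_partial_sum_ge[OF _ diverges] by fastforce
  define S where "S = (\<Sum>j=1..T. (\<sigma> j)^2)"
  have "0 \<le> y^4 * B^2" "0 \<le> y^2 * B^2"
    by simp_all
  moreover have "y^2 * (B^2 / 4) = y^2 * B^2 / 4" "4 * y^4 * (B^2 / 4) = y^4 * B^2"
    by simp_all
  ultimately have "0 < S" "y^2 * (B^2 / 4) \<le> S" "4 * y^4 * (B^2 / 4) \<le> S"
    using T(2) unfolding S_def by linarith+
  have \<sigma>_le: "\<sigma> j ^ 2 \<le> B^2 / 4" if "j \<in> {1..T}" for j
    using power_mono[OF le less_imp_le[OF pos], of j 2] that by (simp add: power_divide)
  show ?thesis
  proof (intro exI conjI allI impI)
    fix alg assume valid: "valid_algorithm N alg"
    have "(y - 3) * sqrt S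
        \<le> measure_pmf.expectation (Pi_pmf {..<N} 0 (\<lambda>_. rademacher_sum \<sigma> {1..T})) (kth_largest N k)"
      unfolding S_def
      by (rule expectation_kth_largest_rademacher_ge[OF _ _ \<sigma>_le])
         (use params \<open>0 < S\<close> \<open>y^2 * (B^2 / 4) \<le> S\<close> \<open>4 * y^4 * (B^2 / 4) \<le> S\<close> in \<open>simp_all add: S_def\<close>)
    also have "\<dots> = measure_pmf.expectation (random_walk_losses \<sigma> N T) (regret_eps N alg T \<epsilon>)"
    proof -
      have "regret_eps N alg T \<epsilon> = (\<lambda>L. kth_largest N k (regret_vec N alg T L))"
        by (simp add: fun_eq_iff regret_eps_def k_def)
      then show ?thesis
        by (simp add: expectation_kth_largest_regret[OF valid params(3,4)])
    qed
    finally show "sqrt (2 * ln (1 / \<epsilon>)) - 6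
        \<le> measure_pmf.expectation (random_walk_losses \<sigma> N T) (regret_eps N alg T \<epsilon>)
           / sqrt (\<Sum>j=1..T. (\<sigma> j)^2)"
      using \<open>0 < S\<close> by (simp add: pos_le_divide_eq y_def S_def)
  qed (use params T in \<open>simp_all add: S_def\<close>)
qed

theorem theorem4p3:
  fixes B :: real and \<sigma> :: "nat \<Rightarrow> real"
  assumes "B > 0"
    and "\<And>j. j \<ge> 1 \<Longrightarrow> \<sigma> j > 0"
    and "\<And>j. j \<ge> 1 \<Longrightarrow> \<sigma> j \<le> B / 2"
    and "\<not> summable (\<lambda>j. (\<sigma> j)^2)"
  shows "\<exists>\<epsilon>0 > 0. \<exists>c1 > 0. \<exists>c2 > 0. \<forall>\<epsilon>. 0 < \<epsilon> \<and> \<epsilon> < \<epsilon>0 \<longrightarrow>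
           (\<exists>N T::nat. c1 / \<epsilon>^2 \<le> real N \<and> real N \<le> c2 / \<epsilon>^2 \<and> T \<ge> 1 \<and>
              (\<forall>alg. valid_algorithm N alg \<longrightarrow>
                 measure_pmf.expectation (random_walk_losses \<sigma> N T) (regret_eps N alg T \<epsilon>)
                   / sqrt (\<Sum>j=1..T. (\<sigma> j)^2)
                 \<ge> sqrt (2 * ln (1 / \<epsilon>)) - 6))"
proof -
  have "0 < (1 / 1000 :: real)" "0 < (1 :: real)" "0 < (2 :: real)"
    by simp_all
  with regret_eps_lower_bound[OF assms(2-4)] show ?thesis
    by blast
qed

end
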